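(* Let $d\ge1$ and let $\boldsymbol{w}_i,\boldsymbol{w}_j\in\mathbb{R}^d$ be independent with $\boldsymbol{w}_i,\boldsymbol{w}_j\sim\mathcal{N}(0,\mathbf{I}_d)$. Then $w_{ij}=\|\boldsymbol{w}_i+\boldsymbol{w}_j\|_2$ has probability density $$p(w_{ij})=\frac{w_{ij}^{d-1}e^{-w_{ij}^2/4}}{2^{d-1}\Gamma(\frac d2)},\quad w_{ij}\ge0.$$ Consequently, if $\boldsymbol{w}_1,\dots,\boldsymbol{w}_m$ ($m\ge2$) are i.i.d. $\mathcal{N}(0,\mathbf{I}_d)$ (IIDRFs), the RF-conformity satisfies $\rho_{\mathrm{IIDRF}}(\boldsymbol{x},\boldsymbol{y})=e^{v^2}$ for all $\boldsymbol{x},\boldsymbol{y}\in\mathbb{R}^d$, where $v=\|\boldsymbol{x}+\boldsymbol{y}\|_2$.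
   Context: RF-conformity: $\rho(\boldsymbol{x},\boldsymbol{y})=\frac{\Gamma(d/2)}{m(m-1)}\sum_{i=1}^m\sum_{j\ne i}\mathbb{E}\big(\sum_{k\ge0}\frac{v^{2k}w_{ij}^{2k}}{2^{2k}k!\,\Gamma(k+d/2)}\big)$ with $w_{ij}=\|\boldsymbol{w}_i+\boldsymbol{w}_j\|_2$ and $v=\|\boldsymbol{x}+\boldsymbol{y}\|_2$. *)

theory Defs
  imports "HOL-Probability.Probability"
begin

text \<open>Euclidean space R^d is modelled as real^'n with d = CARD('n).
  The standard Gaussian N(0, I_d) has density prod_i phi(x_i) w.r.t. Lebesgue measure.\<close>

definition std_gauss_density :: "real ^ 'n \<Rightarrow> real" where
  "std_gauss_density x = (\<Prod>i\<in>UNIV. std_normal_density (x $ i))"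

definition wij_density :: "nat \<Rightarrow> real \<Rightarrow> real" where
  "wij_density d r = (if 0 \<le> r then r ^ (d - 1) * exp (- r\<^sup>2 / 4) / (2 ^ (d - 1) * Gamma (real d / 2)) else 0)"

definition rf_conformity :: "'a measure \<Rightarrow> (nat \<Rightarrow> 'a \<Rightarrow> real ^ 'n) \<Rightarrow> nat \<Rightarrow> real ^ 'n \<Rightarrow> real ^ 'n \<Rightarrow> real" where
  "rf_conformity M W m x y =
     (let d = CARD('n); v = norm (x + y) in
      Gamma (real d / 2) / (real m * (real m - 1)) *
      (\<Sum>i<m. \<Sum>j\<in>{..<m} - {i}.
         (\<integral>\<omega>. (\<Sum>k. v ^ (2*k) * (norm (W i \<omega> + W j \<omega>)) ^ (2*k)
                     / (2 ^ (2*k) * fact k * Gamma (real k + real d / 2))) \<partial>M)))"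

end

(* W_i + W_j has the convolution of two standard Gaussian densities as its density, and completing
   the square identifies it as the N(0, 2I) density exp(-|c|^2/4) / (4 pi)^(d/2). The image of
   Lebesgue measure under the norm has density d omega_d r^(d-1), the derivative of the ball volume
   omega_d r^d, so the norm of this radially symmetric vector has density
   d omega_d r^(d-1) exp(-r^2/4) / (4 pi)^(d/2) = p(r). The substitution t = r^2/4 turns the moments
   of p into Gamma integrals, E w^(2k) = 4^k Gamma(k + d/2) / Gamma(d/2). By monotone convergence the
   k-th term of the series in the RF-conformity therefore has expectation v^(2k) / (k! Gamma(d/2)),
   the series has expectation e^(v^2) / Gamma(d/2) for every pair i ~= j, and the normalisation
   Gamma(d/2) / (m (m - 1)) turns the double sum into e^(v^2). *)

theory Submission
  imports Defs
begin

section \<open>Polar coordinates\<close>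

lemma unit_ball_vol_mult_Gamma:
  assumes "0 < d"
  shows "real d * unit_ball_vol (real d) * Gamma (real d / 2) = 2 * sqrt pi ^ d"
proof -
  have pi_power: "pi powr (real d / 2) = sqrt pi ^ d"
    by (simp add: powr_half_sqrt[symmetric] powr_realpow[symmetric] powr_powr)
  have Gamma_succ: "Gamma (real d / 2 + 1) = real d / 2 * Gamma (real d / 2)"
    using assms by (intro Gamma_plus1) (auto dest: nonpos_Ints_nonpos)
  have "Gamma (real d / 2) \<noteq> 0"
    using assms by (auto simp: Gamma_eq_zero_iff dest: nonpos_Ints_nonpos)
  then show ?thesis
    using assms unfolding unit_ball_vol_def pi_power Gamma_succ by (simp add: field_simps)
qed

definition sphere_area :: "nat \<Rightarrow> real \<Rightarrow> real" where
  "sphere_area d r = (if 0 \<le> r then real d * unit_ball_vol (real d) * r ^ (d - 1) else 0)"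

lemma sphere_area_nonneg: "0 \<le> sphere_area d r"
  by (simp add: sphere_area_def)

lemma borel_measurable_sphere_area [measurable]: "sphere_area d \<in> borel_measurable borel"
  unfolding sphere_area_def by measurable

lemma emeasure_lborel_cball_max:
  "emeasure lborel (cball (0::'a::euclidean_space) t) = ennreal (unit_ball_vol DIM('a) * max t 0 ^ DIM('a))"
proof (cases "0 \<le> t")
  case True
  then show ?thesis by (simp add: emeasure_cball)
next
  case False
  then show ?thesis by simp
qed

lemma nn_integral_sphere_area_atMost:
  assumes "0 < d"
  shows "(\<integral>\<^sup>+r. ennreal (sphere_area d r) * indicator {..t} r \<partial>lborel)
           = ennreal (unit_ball_vol d * max t 0 ^ d)"
proof (cases "0 \<le> t")
  case True
  have "(\<integral>\<^sup>+r. ennreal (sphere_area d r) * indicator {..t} r \<partial>lborel)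
      = (\<integral>\<^sup>+r. ennreal (real d * unit_ball_vol d * r ^ (d - 1)) * indicator {0..t} r \<partial>lborel)"
    by (intro nn_integral_cong) (auto simp: sphere_area_def split: split_indicator)
  also have "\<dots> = ennreal (unit_ball_vol d * t ^ d - unit_ball_vol d * 0 ^ d)"
    using True by (intro nn_integral_FTC_Icc) (auto intro!: derivative_eq_intros)
  finally show ?thesis
    using True assms by simp
next
  case False
  then have "(\<lambda>r. ennreal (sphere_area d r) * indicator {..t} r) = (\<lambda>_. 0)"
    by (auto simp: sphere_area_def fun_eq_iff split: split_indicator)
  then show ?thesis
    using False assms by simp
qed

lemma distr_norm_lborel:
  "distr (lborel :: 'a::euclidean_space measure) borel norm
     = density lborel (\<lambda>r. ennreal (sphere_area DIM('a) r))"
proof (rule measure_eqI_generator_eq[where E="range atMost" and \<Omega>=UNIV and A="\<lambda>i. {..real i}"])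
  have atMost_eq: "emeasure (distr (lborel :: 'a measure) borel norm) {..t}
      = ennreal (unit_ball_vol DIM('a) * max t 0 ^ DIM('a))" for t
  proof -
    have "norm -` {..t} = cball (0::'a) t"
      by auto
    then show ?thesis
      by (simp add: emeasure_distr emeasure_lborel_cball_max)
  qed
  show "emeasure (distr (lborel :: 'a measure) borel norm) X
      = emeasure (density lborel (\<lambda>r. ennreal (sphere_area DIM('a) r))) X"
    if "X \<in> range atMost" for X
    using that by (auto simp: atMost_eq emeasure_density nn_integral_sphere_area_atMost)
  show "emeasure (distr (lborel :: 'a measure) borel norm) {..real i} \<noteq> \<infinity>" for i
    by (simp add: atMost_eq)
qed (auto simp: Int_stable_def borel_eq_atMost intro: real_arch_simple)

lemma nn_integral_norm_lborel:
  fixes f :: "real \<Rightarrow> ennreal"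
  assumes [measurable]: "f \<in> borel_measurable borel"
  shows "(\<integral>\<^sup>+x. f (norm x) \<partial>(lborel :: 'a::euclidean_space measure))
           = (\<integral>\<^sup>+r. ennreal (sphere_area DIM('a) r) * f r \<partial>lborel)"
proof -
  have "(\<integral>\<^sup>+x. f (norm x) \<partial>(lborel :: 'a measure))
      = (\<integral>\<^sup>+r. f r \<partial>distr (lborel :: 'a measure) borel norm)"
    by (simp add: nn_integral_distr)
  also have "\<dots> = (\<integral>\<^sup>+r. ennreal (sphere_area DIM('a) r) * f r \<partial>lborel)"
    by (simp add: distr_norm_lborel nn_integral_density)
  finally show ?thesis .
qed

section \<open>Gaussian integrals\<close>

lemma nn_integral_atLeast_eq_SUP:
  fixes f :: "real \<Rightarrow> ennreal"
  assumes [measurable]: "f \<in> borel_measurable borel"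
    and "incseq u" and "filterlim u at_top sequentially"
  shows "(\<integral>\<^sup>+x. f x * indicator {a..} x \<partial>lborel) = (SUP n. \<integral>\<^sup>+x. f x * indicator {a..u n} x \<partial>lborel)"
proof -
  have inc: "incseq (\<lambda>n x. f x * indicator {a..u n} x)"
    using \<open>incseq u\<close>
    by (auto simp: incseq_def le_fun_def intro!: mult_left_mono split: split_indicator
             dest: order_trans)
  have "(SUP n. f x * indicator {a..u n} x) = f x * indicator {a..} x" for x
  proof (rule LIMSEQ_unique[OF LIMSEQ_SUP])
    show "incseq (\<lambda>n. f x * indicator {a..u n} x)"
      using inc by (simp add: incseq_def le_fun_def)
    have "eventually (\<lambda>n. x \<le> u n) sequentially"
      using \<open>filterlim u at_top sequentially\<close> by (simp add: filterlim_at_top)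
    then have "eventually (\<lambda>n. f x * indicator {a..u n} x = f x * indicator {a..} x) sequentially"
      by eventually_elim (simp split: split_indicator)
    then show "(\<lambda>n. f x * indicator {a..u n} x) \<longlonglongrightarrow> f x * indicator {a..} x"
      by (rule tendsto_eventually)
  qed
  then show ?thesis
    by (simp add: nn_integral_monotone_convergence_SUP[OF inc, symmetric])
qed

lemma nn_integral_substitution_atLeast:
  fixes f g g' :: "real \<Rightarrow> real"
  assumes [measurable]: "f \<in> borel_measurable borel" "g \<in> borel_measurable borel"
      "g' \<in> borel_measurable borel"
    and deriv: "\<And>x. a \<le> x \<Longrightarrow> (g has_real_derivative g' x) (at x)"
    and cont: "continuous_on {a..} g'"
    and nonneg: "\<And>x. a \<le> x \<Longrightarrow> 0 \<le> g' x"
    and lim: "filterlim g at_top at_top"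
  shows "(\<integral>\<^sup>+x. f x * indicator {g a..} x \<partial>lborel) = (\<integral>\<^sup>+x. f (g x) * g' x * indicator {a..} x \<partial>lborel)"
proof -
  define u where "u n = a + real n" for n
  have u: "incseq u" "filterlim u at_top sequentially"
    unfolding u_def incseq_def
    by (auto intro!: filterlim_tendsto_add_at_top filterlim_real_sequentially)
  have mono: "g x \<le> g y" if "a \<le> x" "x \<le> y" for x y
  proof (rule DERIV_nonneg_imp_nondecreasing[OF \<open>x \<le> y\<close>])
    fix z assume "x \<le> z" "z \<le> y"
    then show "\<exists>y. (g has_real_derivative y) (at z) \<and> 0 \<le> y"
      using deriv nonneg that by (meson order_trans)
  qed
  have gu: "incseq (g \<circ> u)" "filterlim (g \<circ> u) at_top sequentially"
    using u filterlim_compose[OF lim u(2)] by (auto simp: incseq_def o_def u_def intro!: mono)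
  have "(\<integral>\<^sup>+x. f x * indicator {g a..} x \<partial>lborel) = (SUP n. \<integral>\<^sup>+x. f x * indicator {g a..g (u n)} x \<partial>lborel)"
    using nn_integral_atLeast_eq_SUP[of "\<lambda>x. ennreal (f x)", OF _ gu]
    by (simp add: ennreal_mult'' ennreal_indicator)
  also have "\<dots> = (SUP n. \<integral>\<^sup>+x. f (g x) * g' x * indicator {a..u n} x \<partial>lborel)"
    using deriv cont nonneg
    by (intro SUP_cong refl nn_integral_substitution)
       (auto simp: u_def set_borel_measurable_def intro: continuous_on_subset)
  also have "\<dots> = (\<integral>\<^sup>+x. f (g x) * g' x * indicator {a..} x \<partial>lborel)"
    using nn_integral_atLeast_eq_SUP[of "\<lambda>x. ennreal (f (g x) * g' x)", OF _ u]
    by (simp add: ennreal_mult'' ennreal_indicator)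
  finally show ?thesis .
qed

lemma nn_integral_substitution_square:
  fixes f :: "real \<Rightarrow> real" and s :: real
  assumes [measurable]: "f \<in> borel_measurable borel" and "0 < s"
  shows "(\<integral>\<^sup>+t. ennreal (f t * indicator {0..} t) \<partial>lborel)
           = (\<integral>\<^sup>+r. ennreal (f (r\<^sup>2 / s) * (2 * r / s) * indicator {0..} r) \<partial>lborel)"
proof -
  have "(\<integral>\<^sup>+t. ennreal (f t * indicator {(\<lambda>r. r\<^sup>2 / s) 0..} t) \<partial>lborel)
      = (\<integral>\<^sup>+r. ennreal (f (r\<^sup>2 / s) * (2 * r / s) * indicator {0..} r) \<partial>lborel)"
  proof (rule nn_integral_substitution_atLeast)
    show "((\<lambda>r. r\<^sup>2 / s) has_real_derivative 2 * x / s) (at x)" for x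
      using \<open>0 < s\<close> by (auto intro!: derivative_eq_intros)
    have "filterlim (\<lambda>r. r\<^sup>2 * (1 / s)) at_top at_top"
      using \<open>0 < s\<close>
      by (intro filterlim_at_top_mult_tendsto_pos[OF tendsto_const] filterlim_pow_at_top
          filterlim_ident) auto
    then show "filterlim (\<lambda>r. r\<^sup>2 / s) at_top at_top"
      by simp
  qed (use \<open>0 < s\<close> in \<open>auto intro!: continuous_intros\<close>)
  then show ?thesis
    by simp
qed

lemma Gamma_integrand_square_substitution:
  fixes r s p :: real
  assumes "0 < r" "0 < s"
  shows "s powr p / 2 * ((r\<^sup>2 / s) powr (p - 1) / exp (r\<^sup>2 / s)) * (2 * r / s)
           = r powr (2 * p - 1) * exp (- r\<^sup>2 / s)"
proof -
  have "r\<^sup>2 = r powr 2"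
    using assms by (simp add: powr_numeral)
  then have base: "(r\<^sup>2 / s) powr (p - 1) = r powr (2 * (p - 1)) / s powr (p - 1)"
    using assms by (simp only: powr_divide powr_powr)
  have "r powr (2 * (p - 1)) * r = r powr (2 * (p - 1) + 1)"
    using assms by (simp only: powr_add) simp
  then have r_power: "r powr (2 * (p - 1)) * r = r powr (2 * p - 1)"
    by (simp add: algebra_simps)
  have s_power: "s powr p / s powr (p - 1) = s"
    using assms by (simp add: powr_diff[symmetric])
  have "s powr p / 2 * ((r\<^sup>2 / s) powr (p - 1) / exp (r\<^sup>2 / s)) * (2 * r / s)
      = (s powr p / s powr (p - 1)) / s * (r powr (2 * (p - 1)) * r) / exp (r\<^sup>2 / s)"
    unfolding base by (simp add: field_simps)
  also have "\<dots> = r powr (2 * p - 1) * exp (- r\<^sup>2 / s)"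
    using assms unfolding s_power r_power by (simp add: exp_minus field_simps)
  finally show ?thesis .
qed

lemma nn_integral_half_gaussian_moment:
  fixes s :: real
  assumes "0 < s"
  shows "(\<integral>\<^sup>+r. ennreal (r ^ n * exp (- r\<^sup>2 / s) * indicator {0..} r) \<partial>lborel)
           = ennreal (s powr ((real n + 1) / 2) * Gamma ((real n + 1) / 2) / 2)"
proof -
  define p where "p = (real n + 1) / 2"
  have "0 < p"
    by (simp add: p_def)
  define f where "f t = s powr p / 2 * (t powr (p - 1) / exp t)" for t
  have integrand: "f (r\<^sup>2 / s) * (2 * r / s) = r ^ n * exp (- r\<^sup>2 / s)" if "0 < r" for r
  proof -
    have "2 * p - 1 = real n"
      by (simp add: p_def field_simps)
    then show ?thesis
      using Gamma_integrand_square_substitution[OF that assms, of p] that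
      by (simp add: f_def powr_realpow)
  qed
  \<comment> \<open>For n = 0 the two integrands differ at r = 0.\<close>
  have "(\<integral>\<^sup>+r. ennreal (r ^ n * exp (- r\<^sup>2 / s) * indicator {0..} r) \<partial>lborel)
      = (\<integral>\<^sup>+r. ennreal (f (r\<^sup>2 / s) * (2 * r / s) * indicator {0..} r) \<partial>lborel)"
    using integrand
    by (intro nn_integral_cong_AE, use AE_lborel_singleton[of 0] in eventually_elim)
       (auto split: split_indicator)
  also have "\<dots> = (\<integral>\<^sup>+t. ennreal (f t * indicator {0..} t) \<partial>lborel)"
    unfolding f_def using assms by (intro nn_integral_substitution_square[symmetric]) auto
  also have "\<dots> = (\<integral>\<^sup>+t. ennreal (s powr p / 2)
                        * ennreal (indicator {0..} t * t powr (p - 1) / exp t) \<partial>lborel)"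
    by (intro nn_integral_cong) (simp add: f_def ennreal_mult'[symmetric] mult_ac)
  also have "\<dots> = ennreal (s powr p / 2) * Gamma p"
    using \<open>0 < p\<close> by (simp add: nn_integral_cmult Gamma_conv_nn_integral_real)
  finally show ?thesis
    using \<open>0 < p\<close> by (simp add: p_def ennreal_mult'[symmetric])
qed

lemma nn_integral_exp_neg_norm_square:
  "(\<integral>\<^sup>+x. ennreal (exp (- (norm x)\<^sup>2)) \<partial>(lborel :: 'a::euclidean_space measure))
     = ennreal (sqrt pi ^ DIM('a))"
proof -
  let ?d = "DIM('a)"
  have moment: "(\<integral>\<^sup>+r. ennreal (r ^ (?d - 1) * exp (- r\<^sup>2) * indicator {0..} r) \<partial>lborel)
      = ennreal (Gamma (real ?d / 2) / 2)"
    using nn_integral_half_gaussian_moment[of 1 "?d - 1"] by (simp add: of_nat_diff)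
  have "(\<integral>\<^sup>+x. ennreal (exp (- (norm x)\<^sup>2)) \<partial>(lborel :: 'a measure))
      = (\<integral>\<^sup>+r. ennreal (real ?d * unit_ball_vol ?d)
               * ennreal (r ^ (?d - 1) * exp (- r\<^sup>2) * indicator {0..} r) \<partial>lborel)"
    by (subst nn_integral_norm_lborel)
       (auto intro!: nn_integral_cong simp: sphere_area_def ennreal_mult'[symmetric] split: split_indicator)
  also have "\<dots> = ennreal (real ?d * unit_ball_vol ?d) * ennreal (Gamma (real ?d / 2) / 2)"
    using moment by (simp add: nn_integral_cmult)
  also have "\<dots> = ennreal (sqrt pi ^ ?d)"
    using unit_ball_vol_mult_Gamma[of ?d] by (simp add: ennreal_mult'[symmetric])
  finally show ?thesis .
qed

lemma nn_integral_gaussian_convolution: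
  fixes c :: "'a::euclidean_space"
  shows "(\<integral>\<^sup>+a. ennreal (exp (- (norm a)\<^sup>2 / 2) * exp (- (norm (c - a))\<^sup>2 / 2)) \<partial>lborel)
           = ennreal (sqrt pi ^ DIM('a) * exp (- (norm c)\<^sup>2 / 4))"
proof -
  define t where "t = (1 / 2) *\<^sub>R c"
  have complete_square:
    "exp (- (norm a)\<^sup>2 / 2) * exp (- (norm (c - a))\<^sup>2 / 2) = exp (- (norm c)\<^sup>2 / 4) * exp (- (norm (a - t))\<^sup>2)"
    for a :: 'a
  proof -
    have "(norm (c - a))\<^sup>2 = (norm c)\<^sup>2 - 2 * (a \<bullet> c) + (norm a)\<^sup>2"
      by (simp add: power2_norm_eq_inner inner_diff_left inner_diff_right inner_commute)
    moreover have "(norm (a - t))\<^sup>2 = (norm a)\<^sup>2 - a \<bullet> c + (norm c)\<^sup>2 / 4"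
      by (simp add: t_def power2_norm_eq_inner inner_diff_left inner_diff_right inner_commute)
    ultimately have "- (norm a)\<^sup>2 / 2 + - (norm (c - a))\<^sup>2 / 2 = - (norm c)\<^sup>2 / 4 + - (norm (a - t))\<^sup>2"
      by linarith
    then show ?thesis
      by (metis exp_add)
  qed
  have "(\<integral>\<^sup>+a. ennreal (exp (- (norm a)\<^sup>2 / 2) * exp (- (norm (c - a))\<^sup>2 / 2)) \<partial>lborel)
      = (\<integral>\<^sup>+a. ennreal (exp (- (norm c)\<^sup>2 / 4)) * ennreal (exp (- (norm (a - t))\<^sup>2)) \<partial>lborel)"
    by (simp only: complete_square ennreal_mult' exp_ge_zero)
  also have "\<dots> = ennreal (exp (- (norm c)\<^sup>2 / 4)) * (\<integral>\<^sup>+a. ennreal (exp (- (norm (a - t))\<^sup>2)) \<partial>lborel)"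
    by (simp add: nn_integral_cmult)
  also have "(\<integral>\<^sup>+a. ennreal (exp (- (norm (a - t))\<^sup>2)) \<partial>lborel)
      = (\<integral>\<^sup>+a. ennreal (exp (- (norm a)\<^sup>2)) \<partial>distr lborel borel ((+) (- t)))"
    by (simp add: nn_integral_distr)
  also have "\<dots> = ennreal (sqrt pi ^ DIM('a))"
    by (simp only: lborel_distr_plus nn_integral_exp_neg_norm_square)
  finally show ?thesis
    by (simp add: ennreal_mult'[symmetric] mult.commute)
qed

section \<open>Densities of sums and norms of random vectors\<close>

lemma (in prob_space) distributed_add_indep:
  fixes X Y :: "'a \<Rightarrow> 'b::euclidean_space"
  assumes X: "distributed M lborel X f" and Y: "distributed M lborel Y g"
    and indep: "indep_var lborel X lborel Y"
  shows "distributed M lborel (\<lambda>\<omega>. X \<omega> + Y \<omega>) (\<lambda>c. \<integral>\<^sup>+a. f a * g (c - a) \<partial>lborel)"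
proof -
  note [measurable] = distributed_borel_measurable[OF X] distributed_borel_measurable[OF Y]
  have [measurable]: "X \<in> borel_measurable M" "Y \<in> borel_measurable M"
    using distributed_measurable[OF X] distributed_measurable[OF Y] by simp_all
  have XY: "distributed M (lborel \<Otimes>\<^sub>M lborel) (\<lambda>\<omega>. (X \<omega>, Y \<omega>)) (\<lambda>(x, y). f x * g y)"
    using X Y indep by (intro distributed_joint_indep lborel.sigma_finite_measure_axioms)
  have "distr M lborel (\<lambda>\<omega>. X \<omega> + Y \<omega>) = density lborel (\<lambda>c. \<integral>\<^sup>+a. f a * g (c - a) \<partial>lborel)"
  proof (rule measure_eqI)
    fix A :: "'b set"
    assume "A \<in> sets (distr M lborel (\<lambda>\<omega>. X \<omega> + Y \<omega>))"
    then have [measurable]: "A \<in> sets borel"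
      by simp
    have "emeasure (distr M lborel (\<lambda>\<omega>. X \<omega> + Y \<omega>)) A = (\<integral>\<^sup>+\<omega>. indicator A (X \<omega> + Y \<omega>) \<partial>M)"
      using nn_integral_distr[of "\<lambda>\<omega>. X \<omega> + Y \<omega>" M lborel "indicator A"] by simp
    also have "\<dots> = (\<integral>\<^sup>+p. (case p of (a, b) \<Rightarrow> f a * g b) * indicator A (fst p + snd p)
                          \<partial>(lborel \<Otimes>\<^sub>M lborel))"
      by (subst distributed_nn_integral[OF XY]) auto
    also have "\<dots> = (\<integral>\<^sup>+a. \<integral>\<^sup>+b. f a * g b * indicator A (a + b) \<partial>lborel \<partial>lborel)"
      by (subst lborel.nn_integral_fst[symmetric]) auto
    also have "\<dots> = (\<integral>\<^sup>+a. \<integral>\<^sup>+c. f a * g (c - a) * indicator A c \<partial>lborel \<partial>lborel)"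
    proof (rule nn_integral_cong)
      fix a :: 'b
      show "(\<integral>\<^sup>+b. f a * g b * indicator A (a + b) \<partial>lborel)
          = (\<integral>\<^sup>+c. f a * g (c - a) * indicator A c \<partial>lborel)"
        by (subst lborel_distr_plus[symmetric, of a]) (simp add: nn_integral_distr)
    qed
    also have "\<dots> = (\<integral>\<^sup>+c. \<integral>\<^sup>+a. f a * g (c - a) * indicator A c \<partial>lborel \<partial>lborel)"
      by (rule lborel_pair.Fubini') simp
    also have "\<dots> = emeasure (density lborel (\<lambda>c. \<integral>\<^sup>+a. f a * g (c - a) \<partial>lborel)) A"
      by (simp add: emeasure_density nn_integral_multc)
    finally show "emeasure (distr M lborel (\<lambda>\<omega>. X \<omega> + Y \<omega>)) A
        = emeasure (density lborel (\<lambda>c. \<integral>\<^sup>+a. f a * g (c - a) \<partial>lborel)) A" .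
  qed simp
  then show ?thesis
    by (simp add: distributed_def)
qed

lemma (in prob_space) distributed_norm_radial:
  fixes Z :: "'a \<Rightarrow> 'b::euclidean_space" and h :: "real \<Rightarrow> real"
  assumes Z: "distributed M lborel Z (\<lambda>z. ennreal (h (norm z)))"
    and [measurable]: "h \<in> borel_measurable borel"
  shows "distributed M lborel (\<lambda>\<omega>. norm (Z \<omega>)) (\<lambda>r. ennreal (sphere_area DIM('b) r * h r))"
proof -
  have [measurable]: "Z \<in> borel_measurable M"
    using distributed_measurable[OF Z] by simp
  have "distr M lborel (\<lambda>\<omega>. norm (Z \<omega>)) = density lborel (\<lambda>r. ennreal (sphere_area DIM('b) r * h r))"
  proof (rule measure_eqI)
    fix A :: "real set"
    assume "A \<in> sets (distr M lborel (\<lambda>\<omega>. norm (Z \<omega>)))"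
    then have [measurable]: "A \<in> sets borel"
      by simp
    have "emeasure (distr M lborel (\<lambda>\<omega>. norm (Z \<omega>))) A = emeasure M (Z -` (norm -` A) \<inter> space M)"
      by (simp add: emeasure_distr vimage_def)
    also have "\<dots> = (\<integral>\<^sup>+(z::'b). ennreal (h (norm z)) * indicator A (norm z) \<partial>lborel)"
      using distributed_emeasure[OF Z, of "norm -` A"] measurable_sets_borel[of "norm :: 'b \<Rightarrow> real" borel A]
      by (simp add: indicator_def)
    also have "\<dots> = (\<integral>\<^sup>+r. ennreal (sphere_area DIM('b) r) * (ennreal (h r) * indicator A r) \<partial>lborel)"
      by (rule nn_integral_norm_lborel) simp
    also have "\<dots> = emeasure (density lborel (\<lambda>r. ennreal (sphere_area DIM('b) r * h r))) A"
      by (simp add: emeasure_density ennreal_mult' sphere_area_nonneg mult.assoc)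
    finally show "emeasure (distr M lborel (\<lambda>\<omega>. norm (Z \<omega>))) A
        = emeasure (density lborel (\<lambda>r. ennreal (sphere_area DIM('b) r * h r))) A" .
  qed simp
  then show ?thesis
    by (simp add: distributed_def)
qed

lemma (in prob_space) indep_vars_indep_var:
  assumes "indep_vars M' X I" and "i \<in> I" "j \<in> I" "i \<noteq> j"
  shows "indep_var (M' i) (X i) (M' j) (X j)"
proof -
  have "indep_var (PiM {i} M') (\<lambda>\<omega>. restrict (\<lambda>k. X k \<omega>) {i}) (PiM {j} M') (\<lambda>\<omega>. restrict (\<lambda>k. X k \<omega>) {j})"
    using assms by (intro indep_var_restrict) auto
  then have "indep_var (M' i) ((\<lambda>f. f i) \<circ> (\<lambda>\<omega>. restrict (\<lambda>k. X k \<omega>) {i}))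
      (M' j) ((\<lambda>f. f j) \<circ> (\<lambda>\<omega>. restrict (\<lambda>k. X k \<omega>) {j}))"
    by (rule indep_var_compose) auto
  then show ?thesis
    by (simp add: comp_def)
qed

lemma std_gauss_density_eq:
  "std_gauss_density (x :: real ^ 'n) = exp (- (norm x)\<^sup>2 / 2) / sqrt (2 * pi) ^ CARD('n)"
proof -
  have "std_gauss_density x = (\<Prod>i\<in>UNIV. exp (- (x $ i)\<^sup>2 / 2)) / sqrt (2 * pi) ^ CARD('n)"
    by (simp add: std_gauss_density_def std_normal_density_def prod.distrib prod_dividef)
  also have "(\<Prod>i\<in>UNIV. exp (- (x $ i)\<^sup>2 / 2)) = exp (- (\<Sum>i\<in>UNIV. (x $ i)\<^sup>2) / 2)"
    by (simp add: exp_sum[symmetric] sum_negf sum_divide_distrib)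
  also have "(\<Sum>i\<in>UNIV. (x $ i)\<^sup>2) = (norm x)\<^sup>2"
    by (simp add: norm_vec_def L2_set_def sum_nonneg)
  finally show ?thesis .
qed

lemma (in prob_space) distributed_add_std_gauss:
  fixes X Y :: "'a \<Rightarrow> real ^ 'n"
  assumes X: "distributed M lborel X (\<lambda>x. ennreal (std_gauss_density x))"
    and Y: "distributed M lborel Y (\<lambda>x. ennreal (std_gauss_density x))"
    and indep: "indep_var borel X borel Y"
  shows "distributed M lborel (\<lambda>\<omega>. X \<omega> + Y \<omega>)
           (\<lambda>c. ennreal (exp (- (norm c)\<^sup>2 / 4) / sqrt (4 * pi) ^ CARD('n)))"
proof -
  have "sqrt (2 * pi) * sqrt (2 * pi) = sqrt pi * sqrt (4 * pi)"
    by (simp add: real_sqrt_mult)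
  then have norm_const: "sqrt (2 * pi) ^ CARD('n) * sqrt (2 * pi) ^ CARD('n)
      = sqrt pi ^ CARD('n) * sqrt (4 * pi) ^ CARD('n)"
    by (simp only: power_mult_distrib[symmetric])
  have "(\<integral>\<^sup>+a. ennreal (std_gauss_density a) * ennreal (std_gauss_density (c - a)) \<partial>lborel)
      = ennreal (exp (- (norm c)\<^sup>2 / 4) / sqrt (4 * pi) ^ CARD('n))" for c :: "real ^ 'n"
  proof -
    have "(\<integral>\<^sup>+a. ennreal (std_gauss_density a) * ennreal (std_gauss_density (c - a)) \<partial>lborel)
        = (\<integral>\<^sup>+a. ennreal (1 / (sqrt (2 * pi) ^ CARD('n) * sqrt (2 * pi) ^ CARD('n)))
             * ennreal (exp (- (norm a)\<^sup>2 / 2) * exp (- (norm (c - a))\<^sup>2 / 2)) \<partial>lborel)"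
      by (intro nn_integral_cong) (simp add: std_gauss_density_eq ennreal_mult'[symmetric])
    also have "\<dots> = ennreal (1 / (sqrt (2 * pi) ^ CARD('n) * sqrt (2 * pi) ^ CARD('n)))
        * ennreal (sqrt pi ^ CARD('n) * exp (- (norm c)\<^sup>2 / 4))"
      using nn_integral_gaussian_convolution[of c] by (subst nn_integral_cmult) simp_all
    also have "\<dots> = ennreal (exp (- (norm c)\<^sup>2 / 4) / sqrt (4 * pi) ^ CARD('n))"
      by (simp add: norm_const ennreal_mult'[symmetric])
    finally show ?thesis .
  qed
  moreover have "indep_var lborel X lborel Y"
    using indep_var_compose[OF indep, of id lborel id lborel] by simp
  ultimately show ?thesis
    using distributed_add_indep[OF X Y] distributed_cong_density by simp
qed

lemma wij_density_eq_sphere_area: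
  assumes "0 < d"
  shows "wij_density d r = sphere_area d r * (exp (- r\<^sup>2 / 4) / sqrt (4 * pi) ^ d)"
proof (cases "0 \<le> r")
  case True
  have "0 < Gamma (real d / 2)"
    using assms by simp
  then have "real d * unit_ball_vol (real d) = 2 * sqrt pi ^ d / Gamma (real d / 2)"
    using unit_ball_vol_mult_Gamma[OF assms] by (simp add: field_simps)
  moreover have "sqrt (4 * pi) ^ d = 2 * 2 ^ (d - 1) * sqrt pi ^ d"
  proof -
    have "(2::real) ^ d = 2 * 2 ^ (d - 1)"
      using assms by (simp add: power_Suc[symmetric])
    then show ?thesis
      by (simp add: real_sqrt_mult power_mult_distrib)
  qed
  ultimately show ?thesis
    using True \<open>0 < Gamma (real d / 2)\<close> by (simp add: wij_density_def sphere_area_def field_simps)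
next
  case False
  then show ?thesis
    by (simp add: wij_density_def sphere_area_def)
qed

lemma (in prob_space) distributed_norm_add_std_gauss:
  fixes X Y :: "'a \<Rightarrow> real ^ 'n"
  assumes "distributed M lborel X (\<lambda>x. ennreal (std_gauss_density x))"
    and "distributed M lborel Y (\<lambda>x. ennreal (std_gauss_density x))"
    and "indep_var borel X borel Y"
  shows "distributed M lborel (\<lambda>\<omega>. norm (X \<omega> + Y \<omega>)) (\<lambda>r. ennreal (wij_density CARD('n) r))"
  using distributed_norm_radial[OF distributed_add_std_gauss[OF assms]]
  by (simp add: wij_density_eq_sphere_area)

section \<open>Moments and the RF-conformity\<close>

lemma borel_measurable_wij_density [measurable]: "wij_density d \<in> borel_measurable borel"
  unfolding wij_density_def by measurable

lemma wij_density_nonneg: "0 < d \<Longrightarrow> 0 \<le> wij_density d r"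
  by (simp add: wij_density_def)

lemma nn_integral_wij_density_moment:
  assumes "0 < d"
  shows "(\<integral>\<^sup>+r. ennreal (wij_density d r * r ^ n) \<partial>lborel)
           = ennreal (2 ^ n * Gamma (real (n + d) / 2) / Gamma (real d / 2))"
proof -
  define C where "C = 1 / (2 ^ (d - 1) * Gamma (real d / 2))"
  have "0 < Gamma (real d / 2)"
    using assms by simp
  then have "0 \<le> C"
    by (simp add: C_def)
  have "(\<integral>\<^sup>+r. ennreal (wij_density d r * r ^ n) \<partial>lborel)
      = (\<integral>\<^sup>+r. ennreal C * ennreal (r ^ (n + d - 1) * exp (- r\<^sup>2 / 4) * indicator {0..} r) \<partial>lborel)"
  proof (rule nn_integral_cong)
    fix r :: real
    have "n + d - 1 = (d - 1) + n"
      using assms by simp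
    then have "r ^ (d - 1) * r ^ n = r ^ (n + d - 1)"
      by (simp only: power_add)
    then show "ennreal (wij_density d r * r ^ n)
        = ennreal C * ennreal (r ^ (n + d - 1) * exp (- r\<^sup>2 / 4) * indicator {0..} r)"
      using \<open>0 \<le> C\<close> by (simp add: wij_density_def C_def ennreal_mult'[symmetric] field_simps)
  qed
  also have "\<dots> = ennreal C * ennreal (4 powr (real (n + d) / 2) * Gamma (real (n + d) / 2) / 2)"
    using nn_integral_half_gaussian_moment[of 4 "n + d - 1"] assms
    by (simp add: nn_integral_cmult of_nat_diff)
  also have "\<dots> = ennreal (2 ^ n * Gamma (real (n + d) / 2) / Gamma (real d / 2))"
  proof -
    have "(4::real) powr (real (n + d) / 2) = (2 powr 2) powr (real (n + d) / 2)"
      by simp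
    also have "\<dots> = 2 ^ (n + d)"
      by (simp add: powr_powr powr_realpow[symmetric] del: of_nat_add)
    also have "\<dots> = 2 ^ n * (2 * 2 ^ (d - 1))"
      using assms by (simp add: power_add power_Suc[symmetric])
    finally show ?thesis
      using \<open>0 \<le> C\<close> \<open>0 < Gamma (real d / 2)\<close>
      by (simp add: C_def ennreal_mult'[symmetric] field_simps)
  qed
  finally show ?thesis .
qed

lemma power2_half_mult_power:
  fixes v r :: real
  shows "((v * r / 2)\<^sup>2) ^ k = v ^ (2 * k) * r ^ (2 * k) / 2 ^ (2 * k)"
  by (simp only: power_mult[symmetric] power_mult_distrib power_divide)

(* bessel_series a ((z/2)^2) = (z/2)^(1-a) I_(a-1)(z) for the modified Bessel function I; the series
   inside rf_conformity is bessel_series (d/2) ((v w_ij / 2)^2). *)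
definition bessel_series :: "real \<Rightarrow> real \<Rightarrow> real" where
  "bessel_series a x = (\<Sum>k. x ^ k / (fact k * Gamma (real k + a)))"

lemma summable_bessel_series:
  fixes x a :: real
  assumes "0 < a"
  shows "summable (\<lambda>k. x ^ k / (fact k * Gamma (real k + a)))"
proof (rule summable_comparison_test')
  show "summable (\<lambda>k. \<bar>x\<bar> ^ k / fact k)"
    using summable_exp[of "\<bar>x\<bar>"] by (simp add: field_simps)
  show "norm (x ^ k / (fact k * Gamma (real k + a))) \<le> \<bar>x\<bar> ^ k / fact k" if "2 \<le> k" for k
  proof -
    have "Gamma 2 \<le> Gamma (real k + a)"
      using that assms by (intro less_imp_le[OF Gamma_real_strict_mono]) auto
    then have "1 \<le> Gamma (real k + a)"
      by (simp add: Gamma_numeral)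
    then show ?thesis
      by (simp add: abs_mult power_abs divide_left_mono)
  qed
qed

lemma bessel_series_nonneg: "0 < a \<Longrightarrow> 0 \<le> x \<Longrightarrow> 0 \<le> bessel_series a x"
  unfolding bessel_series_def by (intro suminf_nonneg summable_bessel_series) auto

lemma borel_measurable_bessel_series [measurable]: "bessel_series a \<in> borel_measurable borel"
  unfolding bessel_series_def by measurable

lemma nn_integral_wij_density_bessel_term:
  assumes "0 < d"
  shows "(\<integral>\<^sup>+r. ennreal (wij_density d r * (((v * r / 2)\<^sup>2) ^ k / (fact k * Gamma (real k + real d / 2))))
            \<partial>lborel) = ennreal ((v\<^sup>2) ^ k / fact k / Gamma (real d / 2))"
proof -
  define c where "c = v ^ (2 * k) / (2 ^ (2 * k) * fact k * Gamma (real k + real d / 2))"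
  have Gamma_pos: "0 < Gamma (real k + real d / 2)" "0 < Gamma (real d / 2)"
    using assms by simp_all
  then have "0 \<le> c"
    by (simp add: c_def power_mult)
  have scaled: "wij_density d r * (((v * r / 2)\<^sup>2) ^ k / (fact k * Gamma (real k + real d / 2)))
      = c * (wij_density d r * r ^ (2 * k))" for r
    using power2_half_mult_power[of v r k] by (simp add: c_def mult_ac)
  have "(\<integral>\<^sup>+r. ennreal (wij_density d r * (((v * r / 2)\<^sup>2) ^ k / (fact k * Gamma (real k + real d / 2))))
          \<partial>lborel) = (\<integral>\<^sup>+r. ennreal c * ennreal (wij_density d r * r ^ (2 * k)) \<partial>lborel)"
    by (simp only: scaled ennreal_mult'[OF \<open>0 \<le> c\<close>])
  also have "\<dots> = ennreal c * ennreal (2 ^ (2 * k) * Gamma (real k + real d / 2) / Gamma (real d / 2))"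
    using assms by (simp add: nn_integral_cmult nn_integral_wij_density_moment add_divide_distrib)
  also have "\<dots> = ennreal ((v\<^sup>2) ^ k / fact k / Gamma (real d / 2))"
  proof -
    have "c * (2 ^ (2 * k) * Gamma (real k + real d / 2) / Gamma (real d / 2))
        = v ^ (2 * k) / fact k / Gamma (real d / 2)"
      using Gamma_pos by (simp add: c_def field_simps)
    then show ?thesis
      using \<open>0 \<le> c\<close> by (simp add: ennreal_mult'[symmetric] power_mult)
  qed
  finally show ?thesis .
qed

lemma nn_integral_wij_density_bessel_series:
  assumes "0 < d"
  shows "(\<integral>\<^sup>+r. ennreal (wij_density d r * bessel_series (real d / 2) ((v * r / 2)\<^sup>2)) \<partial>lborel)
           = ennreal (exp (v\<^sup>2) / Gamma (real d / 2))"
proof -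
  define a where "a = real d / 2"
  have "0 < a"
    using assms by (simp add: a_def)
  define t where "t k r = ((v * r / 2)\<^sup>2) ^ k / (fact k * Gamma (real k + a))" for k r
  have [measurable]: "t k \<in> borel_measurable borel" for k
    unfolding t_def by measurable
  have t_nonneg: "0 \<le> t k r" for k r
    using \<open>0 < a\<close> by (simp add: t_def)
  have "(\<integral>\<^sup>+r. ennreal (wij_density d r * bessel_series a ((v * r / 2)\<^sup>2)) \<partial>lborel)
      = (\<integral>\<^sup>+r. (\<Sum>k. ennreal (wij_density d r * t k r)) \<partial>lborel)"
  proof (rule nn_integral_cong)
    fix r
    have "summable (\<lambda>k. t k r)"
      unfolding t_def using \<open>0 < a\<close> by (rule summable_bessel_series)
    then have "(\<Sum>k. ennreal (wij_density d r * t k r)) = ennreal (\<Sum>k. wij_density d r * t k r)"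
      using assms t_nonneg wij_density_nonneg by (intro suminf_ennreal2 summable_mult) auto
    also have "(\<Sum>k. wij_density d r * t k r) = wij_density d r * bessel_series a ((v * r / 2)\<^sup>2)"
      using suminf_mult[OF \<open>summable (\<lambda>k. t k r)\<close>] by (simp add: bessel_series_def t_def)
    finally show "ennreal (wij_density d r * bessel_series a ((v * r / 2)\<^sup>2))
        = (\<Sum>k. ennreal (wij_density d r * t k r))" ..
  qed
  also have "\<dots> = (\<Sum>k. \<integral>\<^sup>+r. ennreal (wij_density d r * t k r) \<partial>lborel)"
    by (rule nn_integral_suminf) measurable
  also have "\<dots> = (\<Sum>k. ennreal ((v\<^sup>2) ^ k / fact k / Gamma a))"
    using nn_integral_wij_density_bessel_term[OF assms] by (simp only: t_def a_def)
  also have "\<dots> = ennreal (exp (v\<^sup>2) / Gamma a)"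
  proof -
    have "(\<lambda>k. (v\<^sup>2) ^ k / fact k / Gamma a) sums (exp (v\<^sup>2) / Gamma a)"
      using sums_divide[OF exp_converges[of "v\<^sup>2"]] by (simp add: divide_inverse_commute)
    then show ?thesis
      using \<open>0 < a\<close> by (simp add: suminf_ennreal2 sums_iff)
  qed
  finally show ?thesis
    by (simp add: a_def)
qed

lemma (in prob_space) integral_bessel_series_wij_distributed:
  assumes "0 < d" and R: "distributed M lborel R (\<lambda>r. ennreal (wij_density d r))"
  shows "(\<integral>\<omega>. bessel_series (real d / 2) ((v * R \<omega> / 2)\<^sup>2) \<partial>M) = exp (v\<^sup>2) / Gamma (real d / 2)"
proof -
  have "(\<integral>\<omega>. bessel_series (real d / 2) ((v * R \<omega> / 2)\<^sup>2) \<partial>M)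
      = (\<integral>r. wij_density d r * bessel_series (real d / 2) ((v * r / 2)\<^sup>2) \<partial>lborel)"
    using assms by (intro distributed_integral[symmetric]) (auto simp: wij_density_nonneg)
  also have "\<dots> = enn2real (\<integral>\<^sup>+r. ennreal (wij_density d r * bessel_series (real d / 2) ((v * r / 2)\<^sup>2)) \<partial>lborel)"
    using assms by (intro integral_eq_nn_integral) (auto simp: wij_density_nonneg bessel_series_nonneg)
  also have "\<dots> = exp (v\<^sup>2) / Gamma (real d / 2)"
    using assms by (simp add: nn_integral_wij_density_bessel_series)
  finally show ?thesis .
qed

lemma rf_conformity_eq_const:
  fixes W :: "nat \<Rightarrow> 'a \<Rightarrow> real ^ 'n"
  assumes "2 \<le> m"
    and "\<And>i j. i < m \<Longrightarrow> j < m \<Longrightarrow> i \<noteq> j \<Longrightarrow>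
      (\<integral>\<omega>. bessel_series (real CARD('n) / 2) ((norm (x + y) * norm (W i \<omega> + W j \<omega>) / 2)\<^sup>2) \<partial>M) = c"
  shows "rf_conformity M W m x y = Gamma (real CARD('n) / 2) * c"
proof -
  have summand: "v ^ (2 * k) * r ^ (2 * k) / (2 ^ (2 * k) * fact k * Gamma (real k + a))
      = ((v * r / 2)\<^sup>2) ^ k / (fact k * Gamma (real k + a))" for v r a :: real and k
    by (simp add: power2_half_mult_power)
  have "rf_conformity M W m x y = Gamma (real CARD('n) / 2) / (real m * (real m - 1))
      * (\<Sum>i<m. \<Sum>j\<in>{..<m} - {i}. c)"
    using assms(2) unfolding rf_conformity_def Let_def summand
    by (intro arg_cong2[where f = "(*)"] refl sum.cong) (auto simp: bessel_series_def)
  also have "(\<Sum>i<m. \<Sum>j\<in>{..<m} - {i}. c) = real m * (real m - 1) * c"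
    using assms(1) by (simp add: of_nat_diff)
  finally show ?thesis
    using assms(1) by simp
qed

theorem lemma4p1:
  fixes M :: "'a measure" and W :: "nat \<Rightarrow> 'a \<Rightarrow> real ^ 'n" and m :: nat
  assumes "prob_space M"
    and "m \<ge> 2"
    and "\<And>i. i < m \<Longrightarrow> distributed M lborel (W i) (\<lambda>x. ennreal (std_gauss_density x))"
    and "prob_space.indep_vars M (\<lambda>_. borel) W {..<m}"
  shows "(\<forall>i<m. \<forall>j<m. i \<noteq> j \<longrightarrow>
            distributed M lborel (\<lambda>\<omega>. norm (W i \<omega> + W j \<omega>))
              (\<lambda>r. ennreal (wij_density CARD('n) r)))
       \<and> (\<forall>x y. rf_conformity M W m x y = exp ((norm (x + y))\<^sup>2))"
proof -
  interpret prob_space M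
    by fact
  have wij: "distributed M lborel (\<lambda>\<omega>. norm (W i \<omega> + W j \<omega>)) (\<lambda>r. ennreal (wij_density CARD('n) r))"
    if "i < m" "j < m" "i \<noteq> j" for i j
    using that assms(3,4) by (intro distributed_norm_add_std_gauss indep_vars_indep_var) auto
  have "rf_conformity M W m x y = exp ((norm (x + y))\<^sup>2)" for x y :: "real ^ 'n"
  proof -
    have "Gamma (real CARD('n) / 2) \<noteq> 0"
      by (auto simp: Gamma_eq_zero_iff dest: nonpos_Ints_nonpos)
    moreover have "rf_conformity M W m x y
        = Gamma (real CARD('n) / 2) * (exp ((norm (x + y))\<^sup>2) / Gamma (real CARD('n) / 2))"
      using assms(2) wij by (intro rf_conformity_eq_const integral_bessel_series_wij_distributed) auto
    ultimately show ?thesis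
      by simp
  qed
  with wij show ?thesis
    by blast
qed

end
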